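(* Assume the standing setting of the context and let $\Pi:]0,\infty[\to\mathbb R$ be a Borel measurable function satisfying Assumptions (A3), (A2), (A1). Let $\nu>0$. 1) If in (A1) $0<x_{1l}<x_{2r}=\infty$, then $\lim_{x\to\infty}x^{d_1-d_2}\int_\nu^x s^{-d_1-1}\Pi(s)\,ds=0$. 2) If in (A1) $0=x_{1l}<x_{2r}<\infty$, then $\lim_{x\downarrow0}x^{d_2-d_1}\int_x^\nu s^{-d_2-1}\Pi(s)\,ds=0$.
   Context: Fix $r,\alpha\in\mathbb R$, $\sigma\ne0$. $X$ is the geometric Brownian motion $dX(t)=\alpha X(t)dt+\sigma X(t)dW(t)$, $X(0)=x>0$, $W$ a standard Brownian motion; $E_x$ is expectation given $X(0)=x$. $d_1=\frac{(\sigma^2/2-\alpha)-\sqrt{(\sigma^2/2-\alpha)^2+2\sigma^2 r}}{\sigma^2}$, $d_2=\frac{(\sigma^2/2-\alpha)+\sqrt{(\sigma^2/2-\alpha)^2+2\sigma^2 r}}{\sigma^2}$ are the roots of $P(d)=\frac{\sigma^2}{2}d^2+(\alpha-\frac{\sigma^2}{2})d-r$, assumed real with $d_1<d_2$. $f^+=\max(f,0)$. Assumption (A3): $\Pi$ locally integrable on $]0,\infty[$. Assumption (A2): $E_x\left[\int_0^\infty e^{-rs}\Pi^+(X(s))ds\right]<\infty$ for all $x>0$. Assumption (A1): there are $x_{1l}\le x_{1r}<x_{2l}\le x_{2r}$, with either $0\le x_{1l}$ and $x_{2r}<\infty$, or $0<x_{1l}$ and $x_{2r}\le\infty$, such that $\Pi>0$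 on $]x_{1r},x_{2l}[$, $\Pi=0$ on $[x_{1l},x_{1r}]\cup[x_{2l},x_{2r}]$, $\Pi<0$ on $]0,x_{1l}[\cup]x_{2r},\infty[$. *)

theory Defs
  imports "HOL-Probability.Probability"
begin

definition brownian_motion :: "'a measure \<Rightarrow> (real \<Rightarrow> 'a \<Rightarrow> real) \<Rightarrow> bool" where
  "brownian_motion M W \<longleftrightarrow>
     prob_space M \<and>
     (\<forall>t\<ge>0. W t \<in> borel_measurable M) \<and>
     (\<forall>\<omega>\<in>space M. W 0 \<omega> = 0) \<and>
     (\<forall>\<omega>\<in>space M. continuous_on {0..} (\<lambda>t. W t \<omega>)) \<and>
     (\<forall>s t. 0 \<le> s \<and> s < t \<longrightarrow>
        distributed M lborel (\<lambda>\<omega>. W t \<omega> - W s \<omega>)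
          (\<lambda>y. ennreal (normal_density 0 (sqrt (t - s)) y))) \<and>
     (\<forall>(ts :: nat \<Rightarrow> real) n. 0 \<le> ts 0 \<and> (\<forall>i<n. ts i < ts (Suc i)) \<longrightarrow>
        prob_space.indep_vars M (\<lambda>_. borel) (\<lambda>i \<omega>. W (ts (Suc i)) \<omega> - W (ts i) \<omega>) {..<n})"

text \<open>Geometric Brownian motion started at x: the (unique strong) solution of
  dX = \<alpha> X dt + \<sigma> X dW, X(0) = x.\<close>
definition gbm :: "real \<Rightarrow> real \<Rightarrow> (real \<Rightarrow> 'a \<Rightarrow> real) \<Rightarrow> real \<Rightarrow> real \<Rightarrow> 'a \<Rightarrow> real" where
  "gbm \<alpha> \<sigma> W x t \<omega> = x * exp ((\<alpha> - \<sigma>\<^sup>2 / 2) * t + \<sigma> * W t \<omega>)"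

definition d1 :: "real \<Rightarrow> real \<Rightarrow> real \<Rightarrow> real" where
  "d1 r \<alpha> \<sigma> = ((\<sigma>\<^sup>2/2 - \<alpha>) - sqrt ((\<sigma>\<^sup>2/2 - \<alpha>)\<^sup>2 + 2 * \<sigma>\<^sup>2 * r)) / \<sigma>\<^sup>2"

definition d2 :: "real \<Rightarrow> real \<Rightarrow> real \<Rightarrow> real" where
  "d2 r \<alpha> \<sigma> = ((\<sigma>\<^sup>2/2 - \<alpha>) + sqrt ((\<sigma>\<^sup>2/2 - \<alpha>)\<^sup>2 + 2 * \<sigma>\<^sup>2 * r)) / \<sigma>\<^sup>2"

definition A3 :: "(real \<Rightarrow> real) \<Rightarrow> bool" where
  "A3 Pf \<longleftrightarrow> (\<forall>a b. 0 < a \<and> a \<le> b \<longrightarrow> set_integrable lborel {a..b} Pf)"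

definition A2 :: "'a measure \<Rightarrow> (real \<Rightarrow> 'a \<Rightarrow> real) \<Rightarrow> real \<Rightarrow> real \<Rightarrow> real \<Rightarrow> (real \<Rightarrow> real) \<Rightarrow> bool" where
  "A2 M W r \<alpha> \<sigma> Pf \<longleftrightarrow> (\<forall>x>0.
     (\<integral>\<^sup>+\<omega>. (\<integral>\<^sup>+s\<in>{0..}. ennreal (exp (- r * s) * max 0 (Pf (gbm \<alpha> \<sigma> W x s \<omega>))) \<partial>lborel) \<partial>M) < \<infinity>)"

definition A1 :: "(real \<Rightarrow> real) \<Rightarrow> real \<Rightarrow> real \<Rightarrow> real \<Rightarrow> ereal \<Rightarrow> bool" where
  "A1 Pf x1l x1r x2l x2r \<longleftrightarrow>
     x1l \<le> x1r \<and> x1r < x2l \<and> ereal x2l \<le> x2r \<and>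
     ((0 \<le> x1l \<and> x2r < \<infinity>) \<or> (0 < x1l \<and> x2r \<le> \<infinity>)) \<and>
     (\<forall>x. x1r < x \<and> x < x2l \<longrightarrow> Pf x > 0) \<and>
     (\<forall>x>0. (x1l \<le> x \<and> x \<le> x1r) \<or> (x2l \<le> x \<and> ereal x \<le> x2r) \<longrightarrow> Pf x = 0) \<and>
     (\<forall>x>0. x < x1l \<or> x2r < ereal x \<longrightarrow> Pf x < 0)"

end

theory Submission
  imports Defs
begin

(*
  Part 1: Pf vanishes beyond x2l, so the integral from nu to x is eventually constant while
  x powr (d1 - d2) tends to 0.

  Part 2: Pf >= 0 near 0, and once s powr (-d1 - 1) * Pf s is integrable on ]0, nu], dominated
  convergence concludes, since x powr (d2 - d1) * s powr (-d2 - 1) <= s powr (-d1 - 1) for s >= x.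
  The integrability comes from (A2) at x = 1: by Fubini and the Gaussian law of
  log X(t) = (alpha - sigma^2/2) t + sigma W(t), it says that Pf+(e^w) is integrable against the
  discounted occupation density R of log X. Completing the square in the Gaussian exponent gives
  R(w) >= K e^(-d1 w) for all w below some w0, and the substitution y = e^w turns this into
  integrability of y powr (-d1 - 1) * Pf+(y) on ]0, e^w0].
*)

lemma LIMSEQ_floor_grid:
  fixes s :: real
  shows "(\<lambda>n. of_int \<lfloor>real (Suc n) * s\<rfloor> / real (Suc n)) \<longlonglongrightarrow> s"
proof (rule tendsto_sandwich[of "\<lambda>n. s - 1 / real (Suc n)" _ _ "\<lambda>n. s"])
  have "of_int \<lfloor>N * s\<rfloor> / N \<in> {s - 1 / N..s}" if "N > 0" for N :: real
  proof -
    have "(N * s - 1) / N \<le> of_int \<lfloor>N * s\<rfloor> / N" "of_int \<lfloor>N * s\<rfloor> / N \<le> N * s / N"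
      using \<open>N > 0\<close> by (intro divide_right_mono; linarith)+
    then show ?thesis using \<open>N > 0\<close> by (simp add: diff_divide_distrib)
  qed
  then show "\<forall>\<^sub>F n in sequentially. s - 1 / real (Suc n) \<le> of_int \<lfloor>real (Suc n) * s\<rfloor> / real (Suc n)"
    and "\<forall>\<^sub>F n in sequentially. of_int \<lfloor>real (Suc n) * s\<rfloor> / real (Suc n) \<le> s"
    by (auto simp del: of_nat_Suc)
  show "(\<lambda>n. s - 1 / real (Suc n)) \<longlonglongrightarrow> s"
    using tendsto_diff[OF tendsto_const LIMSEQ_Suc[OF lim_const_over_n[of 1]]] by simp
qed simp

lemma borel_measurable_continuous_process:
  fixes X :: "real \<Rightarrow> 'a \<Rightarrow> real"
  assumes meas: "\<And>t. t \<ge> 0 \<Longrightarrow> X t \<in> borel_measurable M"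
    and cont: "\<And>\<omega>. \<omega> \<in> space M \<Longrightarrow> continuous_on {0..} (\<lambda>t. X t \<omega>)"
  shows "(\<lambda>(\<omega>, t). X (max 0 t) \<omega>) \<in> borel_measurable (M \<Otimes>\<^sub>M lborel)"
proof (rule borel_measurable_LIMSEQ_real)
  define grid where "grid n t = max 0 (of_int \<lfloor>real (Suc n) * t\<rfloor> / real (Suc n))" for n t
  show "(\<lambda>(\<omega>, t). X (grid n t) \<omega>) \<in> borel_measurable (M \<Otimes>\<^sub>M lborel)" for n
  proof -
    have "(\<lambda>x. X (max 0 (of_int \<lfloor>real (Suc n) * snd x\<rfloor> / real (Suc n))) (fst x))
        \<in> borel_measurable (M \<Otimes>\<^sub>M lborel)"
      by (rule measurable_compose_countable'[where I=UNIV
            and f="\<lambda>k x. X (max 0 (of_int k / real (Suc n))) (fst x)"]) (use meas in auto)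
    then show ?thesis by (simp add: grid_def case_prod_beta)
  qed
  fix x :: "'a \<times> real" assume "x \<in> space (M \<Otimes>\<^sub>M lborel)"
  then obtain \<omega> and t :: real where x: "x = (\<omega>, t)" and \<omega>: "\<omega> \<in> space M"
    by (cases x) (auto simp: space_pair_measure)
  have "(\<lambda>n. grid n t) \<longlonglongrightarrow> max 0 t"
    unfolding grid_def by (intro tendsto_max tendsto_const LIMSEQ_floor_grid)
  then have "(\<lambda>n. X (grid n t) \<omega>) \<longlonglongrightarrow> X (max 0 t) \<omega>"
    by (rule continuous_on_tendsto_compose[OF cont[OF \<omega>]]) (auto simp: grid_def)
  then show "(\<lambda>n. (\<lambda>(\<omega>, t). X (grid n t) \<omega>) x) \<longlonglongrightarrow> (\<lambda>(\<omega>, t). X (max 0 t) \<omega>) x"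
    by (simp add: x)
qed

lemma nn_integral_drifted_brownian_marginal:
  fixes Q :: "real \<Rightarrow> ennreal"
  assumes BM: "brownian_motion M W" and [measurable]: "Q \<in> borel_measurable borel"
    and "\<sigma> \<noteq> 0" "0 < s"
  shows "(\<integral>\<^sup>+\<omega>. Q (\<mu> * s + \<sigma> * W s \<omega>) \<partial>M) = (\<integral>\<^sup>+w. normal_density (\<mu> * s) (\<bar>\<sigma>\<bar> * sqrt s) w * Q w \<partial>lborel)"
proof -
  interpret prob_space M using BM by (simp add: brownian_motion_def)
  have "\<forall>s t. 0 \<le> s \<and> s < t \<longrightarrow> distributed M lborel (\<lambda>\<omega>. W t \<omega> - W s \<omega>)
      (\<lambda>y. ennreal (normal_density 0 (sqrt (t - s)) y))"
    using BM by (simp add: brownian_motion_def)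
  from this[rule_format, of 0 s]
  have "distributed M lborel (\<lambda>\<omega>. W s \<omega> - W 0 \<omega>) (normal_density 0 (sqrt s))"
    using \<open>0 < s\<close> by simp
  from normal_density_affine[OF this _ \<open>\<sigma> \<noteq> 0\<close>, of "\<mu> * s"]
  have "distributed M lborel (\<lambda>\<omega>. \<mu> * s + \<sigma> * (W s \<omega> - W 0 \<omega>)) (normal_density (\<mu> * s) (\<bar>\<sigma>\<bar> * sqrt s))"
    using \<open>0 < s\<close> by simp
  from distributed_nn_integral[OF this, of Q] show ?thesis
    using BM by (simp add: brownian_motion_def cong: nn_integral_cong)
qed

lemma nn_integral_discounted_drifted_brownian:
  fixes Q :: "real \<Rightarrow> ennreal"
  assumes BM: "brownian_motion M W" and [measurable]: "Q \<in> borel_measurable borel" and "\<sigma> \<noteq> 0"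
  shows "(\<integral>\<^sup>+\<omega>. (\<integral>\<^sup>+s\<in>{0..}. exp (- r * s) * Q (\<mu> * s + \<sigma> * W s \<omega>) \<partial>lborel) \<partial>M)
       = (\<integral>\<^sup>+w. (\<integral>\<^sup>+s\<in>{0<..}. exp (- r * s) * normal_density (\<mu> * s) (\<bar>\<sigma>\<bar> * sqrt s) w \<partial>lborel) * Q w \<partial>lborel)"
proof -
  interpret prob_space M using BM by (simp add: brownian_motion_def)
  have [measurable]: "(\<lambda>(\<omega>, s). W (max 0 s) \<omega>) \<in> borel_measurable (M \<Otimes>\<^sub>M lborel)"
    using BM by (intro borel_measurable_continuous_process) (auto simp: brownian_motion_def)
  \<comment> \<open>W is only given for times t \<ge> 0; the clamp max 0 s keeps F jointly measurable.\<close>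
  define F where "F \<omega> s = ennreal (exp (- r * s)) * Q (\<mu> * s + \<sigma> * W (max 0 s) \<omega>) * indicator {0<..} s"
    for \<omega> s
  define k where "k s w = ennreal (exp (- r * s) * normal_density (\<mu> * s) (\<bar>\<sigma>\<bar> * sqrt s) w)" for s w
  have F_meas: "(\<lambda>(\<omega>, s). F \<omega> s) \<in> borel_measurable (M \<Otimes>\<^sub>M lborel)"
    unfolding F_def by measurable
  have [measurable]: "(\<lambda>(s, w). k s w) \<in> borel_measurable (lborel \<Otimes>\<^sub>M lborel)"
    unfolding k_def normal_density_def by measurable
  have F_marginal: "(\<integral>\<^sup>+\<omega>. F \<omega> s \<partial>M) = (\<integral>\<^sup>+w. k s w * Q w * indicator {0<..} s \<partial>lborel)" for s
    using nn_integral_drifted_brownian_marginal[OF BM _ \<open>\<sigma> \<noteq> 0\<close>, of "\<lambda>w. exp (- r * s) * Q w" s]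
    by (cases "0 < s") (simp_all add: F_def k_def ennreal_mult' mult_ac nn_integral_cmult)
  have "(\<integral>\<^sup>+\<omega>. (\<integral>\<^sup>+s\<in>{0..}. exp (- r * s) * Q (\<mu> * s + \<sigma> * W s \<omega>) \<partial>lborel) \<partial>M)
      = (\<integral>\<^sup>+\<omega>. (\<integral>\<^sup>+s. F \<omega> s \<partial>lborel) \<partial>M)"
    by (intro nn_integral_cong nn_integral_cong_AE eventually_mono[OF AE_lborel_singleton[of 0]])
      (auto simp: F_def split: split_indicator)
  also have "\<dots> = (\<integral>\<^sup>+s. (\<integral>\<^sup>+\<omega>. F \<omega> s \<partial>M) \<partial>lborel)"
  proof -
    have "pair_sigma_finite M lborel"
      by (simp add: pair_sigma_finite_def sigma_finite_lborel sigma_finite_measure_axioms)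
    from pair_sigma_finite.Fubini[OF this F_meas] show ?thesis by simp
  qed
  also have "\<dots> = (\<integral>\<^sup>+w. (\<integral>\<^sup>+s. k s w * Q w * indicator {0<..} s \<partial>lborel) \<partial>lborel)"
    by (simp add: F_marginal lborel_pair.Fubini'[of "\<lambda>s w. k s w * Q w * indicator {0<..} s"])
  also have "\<dots> = (\<integral>\<^sup>+w. (\<integral>\<^sup>+s\<in>{0<..}. k s w \<partial>lborel) * Q w \<partial>lborel)"
  proof (intro nn_integral_cong)
    fix w
    have "(\<lambda>s. k s w * indicator {0<..} s) \<in> borel_measurable lborel"
      unfolding k_def normal_density_def by measurable
    from nn_integral_multc[OF this, of "Q w"]
    show "(\<integral>\<^sup>+s. k s w * Q w * indicator {0<..} s \<partial>lborel) = (\<integral>\<^sup>+s\<in>{0<..}. k s w \<partial>lborel) * Q w"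
      by (simp add: mult_ac)
  qed
  finally show ?thesis by (simp add: k_def)
qed

(* Completing the square in s: for w = -q p the exponent peaks at s = p, with value (mu + q) w / sigma^2. *)
lemma drifted_gaussian_exponent_eq:
  fixes r \<mu> \<sigma> q p s w :: real
  assumes "\<sigma> \<noteq> 0" "s \<noteq> 0" "q\<^sup>2 = \<mu>\<^sup>2 + 2 * \<sigma>\<^sup>2 * r" "w = - q * p"
  shows "- r * s - (w - \<mu> * s)\<^sup>2 / (2 * \<sigma>\<^sup>2 * s) = (\<mu> + q) / \<sigma>\<^sup>2 * w - q\<^sup>2 / (2 * \<sigma>\<^sup>2) * (s - p)\<^sup>2 / s"
proof -
  have r: "r = (q\<^sup>2 - \<mu>\<^sup>2) / (2 * \<sigma>\<^sup>2)" using assms(1,3) by (simp add: field_simps)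
  show ?thesis unfolding r using assms(1,2,4) by (simp add: field_simps power2_eq_square)
qed

lemma discounted_drifted_gaussian_density_ge:
  fixes r \<mu> \<sigma> q p s w :: real
  assumes \<sigma>: "\<sigma> \<noteq> 0" and q: "q\<^sup>2 = \<mu>\<^sup>2 + 2 * \<sigma>\<^sup>2 * r" and w: "w = - q * p"
    and s: "0 < p" "p \<le> s" "s \<le> 2 * p" and gap: "q\<^sup>2 / (2 * \<sigma>\<^sup>2) * (s - p)\<^sup>2 \<le> s"
  shows "exp ((\<mu> + q) / \<sigma>\<^sup>2 * w - 1) / sqrt (4 * pi * \<sigma>\<^sup>2 * p)
    \<le> exp (- r * s) * normal_density (\<mu> * s) (\<bar>\<sigma>\<bar> * sqrt s) w"
proof -
  have "0 < s" using s by simp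
  then have "q\<^sup>2 / (2 * \<sigma>\<^sup>2) * (s - p)\<^sup>2 / s \<le> 1"
    using gap by (subst divide_le_eq_1_pos) auto
  then have "exp ((\<mu> + q) / \<sigma>\<^sup>2 * w - 1) \<le> exp (- r * s - (w - \<mu> * s)\<^sup>2 / (2 * \<sigma>\<^sup>2 * s))"
    using drifted_gaussian_exponent_eq[OF \<sigma> _ q w, of s] \<open>0 < s\<close> by simp
  moreover have "sqrt (2 * pi * \<sigma>\<^sup>2 * s) \<le> sqrt (4 * pi * \<sigma>\<^sup>2 * p)"
  proof -
    have "2 * pi * \<sigma>\<^sup>2 * s \<le> 2 * pi * \<sigma>\<^sup>2 * (2 * p)" using s by (intro mult_left_mono) auto
    then show ?thesis by simp
  qed
  ultimately have "exp ((\<mu> + q) / \<sigma>\<^sup>2 * w - 1) / sqrt (4 * pi * \<sigma>\<^sup>2 * p)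
      \<le> exp (- r * s - (w - \<mu> * s)\<^sup>2 / (2 * \<sigma>\<^sup>2 * s)) / sqrt (2 * pi * \<sigma>\<^sup>2 * s)"
    using \<sigma> \<open>0 < s\<close> by (intro frac_le) auto
  also have "\<dots> = exp (- r * s) * (exp (- ((w - \<mu> * s)\<^sup>2 / (2 * \<sigma>\<^sup>2 * s))) / sqrt (2 * pi * \<sigma>\<^sup>2 * s))"
    by (simp only: diff_conv_add_uminus exp_add times_divide_eq_right)
  also have "\<dots> = exp (- r * s) * normal_density (\<mu> * s) (\<bar>\<sigma>\<bar> * sqrt s) w"
  proof -
    have "(\<bar>\<sigma>\<bar> * sqrt s)\<^sup>2 = \<sigma>\<^sup>2 * s" using \<open>0 < s\<close> by (simp add: power_mult_distrib)
    then show ?thesis by (simp add: normal_density_def mult_ac)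
  qed
  finally show ?thesis .
qed

lemma discounted_drifted_gaussian_density_lower_bound:
  fixes r \<mu> \<sigma> w :: real
  defines "q \<equiv> sqrt (\<mu>\<^sup>2 + 2 * \<sigma>\<^sup>2 * r)"
  assumes \<sigma>: "\<sigma> \<noteq> 0" and D: "0 < \<mu>\<^sup>2 + 2 * \<sigma>\<^sup>2 * r" and w: "w \<le> - 2 * \<sigma>\<^sup>2 / q"
  shows "ennreal (exp ((\<mu> + q) / \<sigma>\<^sup>2 * w - 1) / (sqrt (2 * pi) * q))
    \<le> (\<integral>\<^sup>+s\<in>{0<..}. exp (- r * s) * normal_density (\<mu> * s) (\<bar>\<sigma>\<bar> * sqrt s) w \<partial>lborel)"
proof -
  define A where "A = q\<^sup>2 / (2 * \<sigma>\<^sup>2)"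
  define p where "p = - w / q"
  define t where "t = sqrt (p / A)" \<comment> \<open>on [p, p + t] the exponent stays within 1 of its peak\<close>
  define c where "c = exp ((\<mu> + q) / \<sigma>\<^sup>2 * w - 1) / sqrt (4 * pi * \<sigma>\<^sup>2 * p)"
  have q: "q > 0" "q\<^sup>2 = \<mu>\<^sup>2 + 2 * \<sigma>\<^sup>2 * r" using D by (auto simp: q_def)
  have A: "A > 0" using q(1) \<sigma> by (simp add: A_def)
  have "0 < 2 * \<sigma>\<^sup>2 / q" using q(1) \<sigma> by simp
  then have "w < 0" using w by linarith
  then have p: "p > 0" "w = - q * p"
    using q(1) by (auto simp: p_def field_simps)
  have "2 * \<sigma>\<^sup>2 \<le> - q * w" using w q(1) by (simp add: field_simps)
  then have "1 \<le> - q * w / (2 * \<sigma>\<^sup>2)" using \<sigma> by (subst pos_le_divide_eq) auto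
  also have "\<dots> = A * p" using q(1) by (simp add: A_def p_def power2_eq_square)
  finally have "p / A \<le> p\<^sup>2"
    using A p by (simp add: divide_le_eq power2_eq_square mult_left_mono[of 1 "A * p" p, simplified] mult_ac)
  then have t: "t > 0" "t\<^sup>2 = p / A" "t \<le> p"
    using A p by (auto simp: t_def intro: real_le_lsqrt)
  have c_le: "c \<le> exp (- r * s) * normal_density (\<mu> * s) (\<bar>\<sigma>\<bar> * sqrt s) w" if s: "s \<in> {p..p + t}" for s
  proof -
    have "A * (s - p)\<^sup>2 \<le> A * t\<^sup>2" using s t A by (intro mult_left_mono power_mono) auto
    also have "\<dots> \<le> s" using s t A by simp
    finally show ?thesis
      unfolding c_def using discounted_drifted_gaussian_density_ge[OF \<sigma> q(2) p(2) p(1)] s t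
      by (simp add: A_def)
  qed
  have "ennreal (exp ((\<mu> + q) / \<sigma>\<^sup>2 * w - 1) / (sqrt (2 * pi) * q)) = ennreal (c * t)"
  proof -
    have "(p / A) / (4 * pi * \<sigma>\<^sup>2 * p) = 1 / (2 * pi * q\<^sup>2)"
      using p(1) q(1) \<sigma> by (simp add: A_def field_simps)
    then have "t / sqrt (4 * pi * \<sigma>\<^sup>2 * p) = sqrt (1 / (2 * pi * q\<^sup>2))"
      by (simp only: t_def real_sqrt_divide[symmetric])
    also have "\<dots> = 1 / (sqrt (2 * pi) * q)"
      using q(1) by (simp add: real_sqrt_divide real_sqrt_mult)
    finally have "t / sqrt (4 * pi * \<sigma>\<^sup>2 * p) = 1 / (sqrt (2 * pi) * q)" .
    moreover have "c * t = exp ((\<mu> + q) / \<sigma>\<^sup>2 * w - 1) * (t / sqrt (4 * pi * \<sigma>\<^sup>2 * p))"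
      by (simp add: c_def)
    ultimately show ?thesis by simp
  qed
  also have "ennreal (c * t) = (\<integral>\<^sup>+s. ennreal c * indicator {p..p + t} s \<partial>lborel)"
  proof -
    have "0 \<le> c" using p by (simp add: c_def)
    then show ?thesis using t by (simp add: ennreal_mult nn_integral_cmult_indicator)
  qed
  also have "\<dots> \<le> (\<integral>\<^sup>+s\<in>{0<..}. exp (- r * s) * normal_density (\<mu> * s) (\<bar>\<sigma>\<bar> * sqrt s) w \<partial>lborel)"
    using c_le p by (intro nn_integral_mono) (auto split: split_indicator intro: ennreal_leI)
  finally show ?thesis .
qed

lemma LIMSEQ_nn_set_integral_incseq:
  fixes g :: "'a \<Rightarrow> ennreal"
  assumes "g \<in> borel_measurable M" "incseq A" "range A \<subseteq> sets M"
  shows "(\<lambda>n. \<integral>\<^sup>+x\<in>A n. g x \<partial>M) \<longlonglongrightarrow> (\<integral>\<^sup>+x\<in>(\<Union>n. A n). g x \<partial>M)"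
proof -
  have "(\<lambda>n. emeasure (density M g) (A n)) \<longlonglongrightarrow> emeasure (density M g) (\<Union>n. A n)"
    using assms(2,3) by (intro Lim_emeasure_incseq) auto
  moreover have "(\<Union>n. A n) \<in> sets M" using assms(3) by auto
  ultimately show ?thesis using assms(1,3) by (simp add: emeasure_density subset_eq)
qed

lemma nn_integral_exp_substitution:
  fixes f :: "real \<Rightarrow> real"
  assumes [measurable]: "f \<in> borel_measurable borel"
  shows "(\<integral>\<^sup>+y\<in>{0<..exp b}. f y \<partial>lborel) = (\<integral>\<^sup>+w\<in>{..b}. f (exp w) * exp w \<partial>lborel)"
proof -
  define L where "L n = {b - real n..b}" for n
  have "(\<Union>n. L n) = {..b}"
  proof (intro equalityI subsetI)
    fix x assume "x \<in> {..b}"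
    obtain n :: nat where "b - x \<le> real n" using real_arch_simple by blast
    with \<open>x \<in> {..b}\<close> have "x \<in> L n" by (simp add: L_def)
    then show "x \<in> (\<Union>n. L n)" by blast
  qed (auto simp: L_def)
  moreover have "incseq L" "range L \<subseteq> sets lborel" by (auto simp: incseq_def L_def)
  ultimately have L_lim: "(\<lambda>n. \<integral>\<^sup>+w\<in>L n. f (exp w) * exp w \<partial>lborel) \<longlonglongrightarrow> (\<integral>\<^sup>+w\<in>{..b}. f (exp w) * exp w \<partial>lborel)"
    using LIMSEQ_nn_set_integral_incseq[of "\<lambda>w. ennreal (f (exp w) * exp w)" lborel L] by simp
  define Y where "Y n = {exp (b - real n)..exp b}" for n
  have "(\<Union>n. Y n) = {0<..exp b}"
  proof (intro equalityI subsetI)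
    fix y assume y: "y \<in> {0<..exp b}"
    obtain n :: nat where "b - ln y \<le> real n" using real_arch_simple by blast
    then have "exp (b - real n) \<le> exp (ln y)" by simp
    with y have "y \<in> Y n" by (simp add: Y_def)
    then show "y \<in> (\<Union>n. Y n)" by blast
  qed (auto simp: Y_def intro: less_le_trans[OF exp_gt_zero])
  moreover have "incseq Y" "range Y \<subseteq> sets lborel" by (auto simp: incseq_def Y_def)
  ultimately have "(\<lambda>n. \<integral>\<^sup>+y\<in>Y n. f y \<partial>lborel) \<longlonglongrightarrow> (\<integral>\<^sup>+y\<in>{0<..exp b}. f y \<partial>lborel)"
    using LIMSEQ_nn_set_integral_incseq[of "\<lambda>y. ennreal (f y)" lborel Y] by simp
  moreover have "(\<integral>\<^sup>+y\<in>Y n. f y \<partial>lborel) = (\<integral>\<^sup>+w\<in>L n. f (exp w) * exp w \<partial>lborel)" for n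
    unfolding Y_def L_def nn_integral_set_ennreal
    by (rule nn_integral_substitution[where g=exp and g'=exp])
      (auto simp: set_borel_measurable_def intro!: continuous_on_exp continuous_on_id)
  ultimately show ?thesis
    using L_lim LIMSEQ_unique by auto
qed

lemma minus_d1_eq:
  "- d1 r \<alpha> \<sigma> = ((\<alpha> - \<sigma>\<^sup>2 / 2) + sqrt ((\<alpha> - \<sigma>\<^sup>2 / 2)\<^sup>2 + 2 * \<sigma>\<^sup>2 * r)) / \<sigma>\<^sup>2"
  unfolding d1_def by (subst minus_divide_left) (simp add: power2_commute)

lemma A2_imp_nn_integral_log_scale_finite:
  assumes BM: "brownian_motion M W" and [measurable]: "Pf \<in> borel_measurable borel"
    and A2: "A2 M W r \<alpha> \<sigma> Pf" and \<sigma>: "\<sigma> \<noteq> 0" and D: "0 < (\<sigma>\<^sup>2 / 2 - \<alpha>)\<^sup>2 + 2 * \<sigma>\<^sup>2 * r"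
  obtains w0 where "(\<integral>\<^sup>+w\<in>{..w0}. exp (- d1 r \<alpha> \<sigma> * w) * max 0 (Pf (exp w)) \<partial>lborel) < \<infinity>"
proof
  define \<mu> where "\<mu> = \<alpha> - \<sigma>\<^sup>2 / 2"
  define q where "q = sqrt (\<mu>\<^sup>2 + 2 * \<sigma>\<^sup>2 * r)"
  define a where "a = d1 r \<alpha> \<sigma>"
  define Q where "Q w = max 0 (Pf (exp w))" for w
  define R where "R w = (\<integral>\<^sup>+s\<in>{0<..}. exp (- r * s) * normal_density (\<mu> * s) (\<bar>\<sigma>\<bar> * sqrt s) w \<partial>lborel)" for w
  define w0 where "w0 = - 2 * \<sigma>\<^sup>2 / q"
  define K where "K = exp (- 1) / (sqrt (2 * pi) * q)"
  have D': "0 < \<mu>\<^sup>2 + 2 * \<sigma>\<^sup>2 * r" using D by (simp add: \<mu>_def power2_commute)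
  then have "K > 0" by (simp add: K_def q_def)
  have "(\<integral>\<^sup>+\<omega>. (\<integral>\<^sup>+s\<in>{0..}. ennreal (exp (- r * s) * max 0 (Pf (gbm \<alpha> \<sigma> W 1 s \<omega>))) \<partial>lborel) \<partial>M) < \<infinity>"
    using A2 by (simp add: A2_def)
  also have "(\<integral>\<^sup>+\<omega>. (\<integral>\<^sup>+s\<in>{0..}. ennreal (exp (- r * s) * max 0 (Pf (gbm \<alpha> \<sigma> W 1 s \<omega>))) \<partial>lborel) \<partial>M)
      = (\<integral>\<^sup>+\<omega>. (\<integral>\<^sup>+s\<in>{0..}. exp (- r * s) * ennreal (Q (\<mu> * s + \<sigma> * W s \<omega>)) \<partial>lborel) \<partial>M)"
    by (simp add: gbm_def Q_def \<mu>_def ennreal_mult)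
  also have "\<dots> = (\<integral>\<^sup>+w. R w * Q w \<partial>lborel)"
    unfolding R_def Q_def by (rule nn_integral_discounted_drifted_brownian[OF BM _ \<sigma>]) measurable
  finally have fin: "(\<integral>\<^sup>+w. R w * Q w \<partial>lborel) < \<infinity>" .
  have R_ge: "ennreal (K * exp (- a * w)) \<le> R w" if "w \<le> w0" for w
  proof -
    have "K * exp (- a * w) = exp ((\<mu> + q) / \<sigma>\<^sup>2 * w - 1) / (sqrt (2 * pi) * q)"
      by (simp add: K_def a_def minus_d1_eq \<mu>_def q_def exp_diff exp_minus field_simps)
    then show ?thesis
      using discounted_drifted_gaussian_density_lower_bound[OF \<sigma> D'] that
      by (simp add: R_def w0_def q_def)
  qed
  have "ennreal K * (\<integral>\<^sup>+w\<in>{..w0}. exp (- a * w) * Q w \<partial>lborel)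
      = (\<integral>\<^sup>+w\<in>{..w0}. ennreal (K * exp (- a * w)) * Q w \<partial>lborel)"
    using \<open>K > 0\<close> by (subst nn_integral_cmult[symmetric]) (auto simp: Q_def ennreal_mult mult_ac)
  also have "\<dots> \<le> (\<integral>\<^sup>+w. R w * Q w \<partial>lborel)"
    using R_ge by (intro nn_integral_mono) (auto intro: mult_right_mono split: split_indicator)
  also note fin
  finally show "(\<integral>\<^sup>+w\<in>{..w0}. exp (- d1 r \<alpha> \<sigma> * w) * max 0 (Pf (exp w)) \<partial>lborel) < \<infinity>"
    using \<open>K > 0\<close> by (auto simp: ennreal_mult_less_top a_def Q_def)
qed

lemma A2_imp_set_integrable_near_0:
  assumes "brownian_motion M W" and [measurable]: "Pf \<in> borel_measurable borel"
    and "A2 M W r \<alpha> \<sigma> Pf" and "\<sigma> \<noteq> 0" and "0 < (\<sigma>\<^sup>2 / 2 - \<alpha>)\<^sup>2 + 2 * \<sigma>\<^sup>2 * r"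
  obtains c where "0 < c" "set_integrable lborel {0<..c} (\<lambda>y. y powr (- d1 r \<alpha> \<sigma> - 1) * max 0 (Pf y))"
proof -
  define a where "a = d1 r \<alpha> \<sigma>"
  obtain w0 where "(\<integral>\<^sup>+w\<in>{..w0}. exp (- a * w) * max 0 (Pf (exp w)) \<partial>lborel) < \<infinity>"
    using A2_imp_nn_integral_log_scale_finite[OF assms] unfolding a_def by blast
  also have "(\<integral>\<^sup>+w\<in>{..w0}. exp (- a * w) * max 0 (Pf (exp w)) \<partial>lborel)
      = (\<integral>\<^sup>+y\<in>{0<..exp w0}. y powr (- a - 1) * max 0 (Pf y) \<partial>lborel)"
  proof -
    have "exp w powr (- a - 1) * max 0 (Pf (exp w)) * exp w = exp (- a * w) * max 0 (Pf (exp w))" for w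
    proof -
      have "exp w powr (- a - 1) * exp w = exp (- a * w)"
        by (simp add: powr_def exp_add[symmetric] algebra_simps)
      then show ?thesis by (metis mult.commute mult.left_commute)
    qed
    moreover have "(\<integral>\<^sup>+y\<in>{0<..exp w0}. y powr (- a - 1) * max 0 (Pf y) \<partial>lborel)
        = (\<integral>\<^sup>+w\<in>{..w0}. exp w powr (- a - 1) * max 0 (Pf (exp w)) * exp w \<partial>lborel)"
      by (rule nn_integral_exp_substitution) measurable
    ultimately show ?thesis by (simp only:)
  qed
  also have "\<dots> = (\<integral>\<^sup>+y. indicator {0<..exp w0} y *\<^sub>R (y powr (- a - 1) * max 0 (Pf y)) \<partial>lborel)"
    by (intro nn_integral_cong) (simp split: split_indicator)
  finally have "set_integrable lborel {0<..exp w0} (\<lambda>y. y powr (- d1 r \<alpha> \<sigma> - 1) * max 0 (Pf y))"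
    unfolding set_integrable_def a_def by (intro integrableI_nonneg) auto
  then show ?thesis using that[of "exp w0"] by simp
qed

(* Dominated convergence in t = 1/x: for y >= x the weight (x/y) powr (b - a) is at most 1. *)
lemma tendsto_powr_interval_integral_at_right_0:
  fixes f :: "real \<Rightarrow> real" and a b \<nu> :: real
  assumes "a < b" "0 < \<nu>" and [measurable]: "f \<in> borel_measurable borel"
    and int: "set_integrable lborel {0<..\<nu>} (\<lambda>y. y powr (- a - 1) * f y)"
  shows "((\<lambda>x. x powr (b - a) * (LBINT y=ereal x..ereal \<nu>. y powr (- b - 1) * f y)) \<longlongrightarrow> 0) (at_right 0)"
proof -
  define S where "S t y = inverse t powr (b - a) * (indicator {inverse t..\<nu>} y * (y powr (- b - 1) * f y))"
    for t y
  define w where "w y = indicator {0<..\<nu>} y * \<bar>y powr (- a - 1) * f y\<bar>" for y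
  have "((\<lambda>t. integral\<^sup>L lborel (S t)) \<longlongrightarrow> integral\<^sup>L lborel (\<lambda>_ :: real. 0 :: real)) at_top"
  proof (rule integral_dominated_convergence_at_top)
    show "integrable lborel w"
      using set_integrable_abs[OF int] by (simp add: w_def[abs_def] set_integrable_def)
    have lim: "((\<lambda>t. inverse t powr (b - a)) \<longlongrightarrow> 0) at_top"
      using \<open>a < b\<close> by (intro tendsto_zero_powrI tendsto_inverse_0_at_top filterlim_ident tendsto_const)
        (auto simp: eventually_at_top_linorder)
    have "norm (S t y) \<le> norm (inverse t powr (b - a)) * \<bar>y powr (- b - 1) * f y\<bar>" for t y
      unfolding S_def norm_mult by (intro mult_left_mono) (auto simp: abs_mult indicator_def)
    then show "AE y in lborel. ((\<lambda>t. S t y) \<longlongrightarrow> 0) at_top"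
      by (intro AE_I2 tendsto_0_le[OF lim] always_eventually allI) assumption
    show "\<forall>\<^sub>F t in at_top. AE y in lborel. norm (S t y) \<le> w y"
    proof (intro eventually_at_top_linorderI[of 1] AE_I2)
      fix t y :: real assume "1 \<le> t"
      show "norm (S t y) \<le> w y"
      proof (cases "y \<in> {inverse t..\<nu>}")
        case True
        then have "0 < y" using \<open>1 \<le> t\<close> by (auto intro: less_le_trans[of 0 "inverse t"])
        have "inverse t powr (b - a) * y powr (- b - 1) \<le> y powr (b - a) * y powr (- b - 1)"
          using True \<open>a < b\<close> \<open>1 \<le> t\<close> by (intro mult_right_mono powr_mono2) auto
        also have "\<dots> = y powr (- a - 1)" using \<open>0 < y\<close> by (simp add: powr_add[symmetric])
        finally show ?thesis
          using True \<open>0 < y\<close> by (simp add: S_def w_def abs_mult mult.assoc[symmetric] mult_right_mono)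
      qed (simp add: S_def w_def)
    qed
  qed (simp_all add: S_def[abs_def])
  moreover have "\<forall>\<^sub>F t in at_top. integral\<^sup>L lborel (S t) =
      inverse t powr (b - a) * (LBINT y=ereal (inverse t)..ereal \<nu>. y powr (- b - 1) * f y)"
  proof (rule eventually_at_top_linorderI[of "inverse \<nu>"])
    fix t assume "inverse \<nu> \<le> t"
    then have "inverse t \<le> inverse (inverse \<nu>)"
      using \<open>0 < \<nu>\<close> by (intro le_imp_inverse_le) auto
    then show "integral\<^sup>L lborel (S t) = inverse t powr (b - a) * (LBINT y=ereal (inverse t)..ereal \<nu>. y powr (- b - 1) * f y)"
      by (simp add: interval_integral_Icc set_lebesgue_integral_def S_def[abs_def])
  qed
  ultimately show ?thesis
    unfolding at_right_to_top filterlim_filtermap by (simp add: tendsto_cong)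
qed

lemma tendsto_neg_powr_mult_interval_integral_at_top:
  fixes g :: "real \<Rightarrow> real"
  assumes "e < 0" and vanish: "\<And>y. K \<le> y \<Longrightarrow> g y = 0"
  shows "((\<lambda>x. x powr e * (LBINT y=ereal \<nu>..ereal x. g y)) \<longlongrightarrow> 0) at_top"
proof -
  define K' where "K' = max \<nu> K"
  define C where "C = (LBINT y:{\<nu>..K'}. g y)"
  have "((\<lambda>x. x powr e * C) \<longlongrightarrow> 0 * C) at_top"
    using \<open>e < 0\<close> by (intro tendsto_mult tendsto_const tendsto_neg_powr filterlim_ident)
  moreover have "\<forall>\<^sub>F x in at_top. x powr e * C = x powr e * (LBINT y=ereal \<nu>..ereal x. g y)"
  proof (rule eventually_at_top_linorderI[of K'])
    fix x assume "K' \<le> x"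
    then have "(LBINT y=ereal \<nu>..ereal x. g y) = (LBINT y:{\<nu>..x}. g y)"
      by (intro interval_integral_Icc) (simp add: K'_def)
    also have "\<dots> = C"
      unfolding C_def set_lebesgue_integral_def using \<open>K' \<le> x\<close> vanish
      by (intro Bochner_Integration.integral_cong) (auto simp: K'_def split: split_indicator)
    finally show "x powr e * C = x powr e * (LBINT y=ereal \<nu>..ereal x. g y)" by simp
  qed
  ultimately show ?thesis by (simp add: tendsto_cong)
qed

lemma A3_set_integrable_powr_mult:
  fixes f :: "real \<Rightarrow> real"
  assumes "A3 f" and [measurable]: "f \<in> borel_measurable borel" and "0 < x"
  shows "set_integrable lborel {x..c} (\<lambda>y. y powr p * f y)"
proof (rule set_integrable_bound[where f="\<lambda>y. (x powr p + c powr p) * f y"])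
  show "set_integrable lborel {x..c} (\<lambda>y. (x powr p + c powr p) * f y)"
    using assms(1,3) by (cases "x \<le> c") (auto simp: A3_def)
  show "set_borel_measurable lborel {x..c} (\<lambda>y. y powr p * f y)"
    unfolding set_borel_measurable_def by measurable
  have "y powr p \<le> x powr p + c powr p" if "y \<in> {x..c}" for y
  proof (cases "p \<ge> 0")
    case True
    then have "y powr p \<le> c powr p" using that \<open>0 < x\<close> by (intro powr_mono2) auto
    then show ?thesis by (simp add: add_increasing)
  next
    case False
    then have "y powr p \<le> x powr p" using that \<open>0 < x\<close> by (intro powr_mono2') auto
    then show ?thesis by (simp add: add_increasing2)
  qed
  then show "AE y in lborel. y \<in> {x..c} \<longrightarrow> norm (y powr p * f y) \<le> norm ((x powr p + c powr p) * f y)"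
    by (intro AE_I2) (auto simp: abs_mult intro!: mult_right_mono)
qed

lemma A3_set_integrable_powr_mult_extend:
  fixes f :: "real \<Rightarrow> real"
  assumes "A3 f" and [measurable]: "f \<in> borel_measurable borel" and "0 < c"
    and near_0: "set_integrable lborel {0<..c} (\<lambda>y. y powr p * f y)"
  shows "set_integrable lborel {0<..\<nu>} (\<lambda>y. y powr p * f y)"
proof (cases "\<nu> \<le> c")
  case True
  then show ?thesis by (intro set_integrable_subset[OF near_0]) auto
next
  case False
  then have "{0<..\<nu>} = {0<..c} \<union> {c..\<nu>}" using \<open>0 < c\<close> by auto
  then show ?thesis
    using set_integrable_Un[OF near_0 A3_set_integrable_powr_mult[OF assms(1,2,3)]] by simp
qed

lemma A1_pos_x2l: "A1 Pf x1l x1r x2l x2r \<Longrightarrow> 0 < x2l"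
  unfolding A1_def by linarith

lemma A1_vanishes_beyond_x2l: "A1 Pf x1l x1r x2l \<infinity> \<Longrightarrow> x2l \<le> y \<Longrightarrow> Pf y = 0"
  using A1_pos_x2l[of Pf x1l x1r x2l \<infinity>] unfolding A1_def by auto

lemma A1_nonneg_below_x2l: "A1 Pf 0 x1r x2l x2r \<Longrightarrow> 0 < y \<Longrightarrow> y < x2l \<Longrightarrow> 0 \<le> Pf y"
  unfolding A1_def by (cases "y \<le> x1r") (auto intro: less_imp_le)

lemma d1_less_d2:
  assumes "\<sigma> \<noteq> 0" and "0 < (\<sigma>\<^sup>2 / 2 - \<alpha>)\<^sup>2 + 2 * \<sigma>\<^sup>2 * r"
  shows "d1 r \<alpha> \<sigma> < d2 r \<alpha> \<sigma>"
  unfolding d1_def d2_def using assms by (intro divide_strict_right_mono) auto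

lemma A1_A2_A3_set_integrable_powr_minus_d1:
  assumes "\<sigma> \<noteq> 0" and "0 < (\<sigma>\<^sup>2 / 2 - \<alpha>)\<^sup>2 + 2 * \<sigma>\<^sup>2 * r" and "brownian_motion M W"
    and Pf: "Pf \<in> borel_measurable borel" and "A3 Pf" and "A2 M W r \<alpha> \<sigma> Pf"
    and A1: "A1 Pf 0 x1r x2l x2r"
  shows "set_integrable lborel {0<..\<nu>} (\<lambda>y. y powr (- d1 r \<alpha> \<sigma> - 1) * Pf y)"
proof -
  obtain c where "0 < c"
    and near_0: "set_integrable lborel {0<..c} (\<lambda>y. y powr (- d1 r \<alpha> \<sigma> - 1) * max 0 (Pf y))"
    using A2_imp_set_integrable_near_0[OF assms(3,4,6,1,2)] by blast
  define c' where "c' = min c (x2l / 2)"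
  have "0 < c'" using \<open>0 < c\<close> A1_pos_x2l[OF A1] by (simp add: c'_def)
  have "set_integrable lborel {0<..c'} (\<lambda>y. y powr (- d1 r \<alpha> \<sigma> - 1) * Pf y)
      \<longleftrightarrow> set_integrable lborel {0<..c'} (\<lambda>y. y powr (- d1 r \<alpha> \<sigma> - 1) * max 0 (Pf y))"
    using A1_nonneg_below_x2l[OF A1] A1_pos_x2l[OF A1]
    by (intro set_integrable_cong) (auto simp: c'_def)
  also have "\<dots>" using near_0 by (rule set_integrable_subset) (auto simp: c'_def)
  finally show ?thesis
    by (rule A3_set_integrable_powr_mult_extend[OF \<open>A3 Pf\<close> Pf \<open>0 < c'\<close>])
qed

theorem proposition5:
  fixes r \<alpha> \<sigma> \<nu> x1l x1r x2l :: real and x2r :: ereal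
    and M :: "'a measure" and W :: "real \<Rightarrow> 'a \<Rightarrow> real" and Pf :: "real \<Rightarrow> real"
  assumes "\<sigma> \<noteq> 0"
    and "(\<sigma>\<^sup>2/2 - \<alpha>)\<^sup>2 + 2 * \<sigma>\<^sup>2 * r > 0"
    and "brownian_motion M W"
    and "Pf \<in> borel_measurable borel"
    and "A3 Pf"
    and "A2 M W r \<alpha> \<sigma> Pf"
    and "A1 Pf x1l x1r x2l x2r"
    and "\<nu> > 0"
  shows "(0 < x1l \<and> x2r = \<infinity> \<longrightarrow>
           ((\<lambda>x. x powr (d1 r \<alpha> \<sigma> - d2 r \<alpha> \<sigma>) *
                 (LBINT s=ereal \<nu>..ereal x. s powr (- d1 r \<alpha> \<sigma> - 1) * Pf s)) \<longlongrightarrow> 0) at_top)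
       \<and> (0 = x1l \<and> x2r < \<infinity> \<longrightarrow>
           ((\<lambda>x. x powr (d2 r \<alpha> \<sigma> - d1 r \<alpha> \<sigma>) *
                 (LBINT s=ereal x..ereal \<nu>. s powr (- d2 r \<alpha> \<sigma> - 1) * Pf s)) \<longlongrightarrow> 0) (at_right 0))"
proof -
  have d12: "d1 r \<alpha> \<sigma> < d2 r \<alpha> \<sigma>" using assms(1,2) by (rule d1_less_d2)
  show ?thesis
  proof (intro conjI impI)
    assume "0 < x1l \<and> x2r = \<infinity>"
    then have "Pf y = 0" if "x2l \<le> y" for y
      using A1_vanishes_beyond_x2l assms(7) that by auto
    then show "((\<lambda>x. x powr (d1 r \<alpha> \<sigma> - d2 r \<alpha> \<sigma>) *
        (LBINT s=ereal \<nu>..ereal x. s powr (- d1 r \<alpha> \<sigma> - 1) * Pf s)) \<longlongrightarrow> 0) at_top"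
      using d12 by (intro tendsto_neg_powr_mult_interval_integral_at_top[where K=x2l]) auto
  next
    assume "0 = x1l \<and> x2r < \<infinity>"
    then have "set_integrable lborel {0<..\<nu>} (\<lambda>y. y powr (- d1 r \<alpha> \<sigma> - 1) * Pf y)"
      using A1_A2_A3_set_integrable_powr_minus_d1[OF assms(1-6)] assms(7) by auto
    then show "((\<lambda>x. x powr (d2 r \<alpha> \<sigma> - d1 r \<alpha> \<sigma>) *
        (LBINT s=ereal x..ereal \<nu>. s powr (- d2 r \<alpha> \<sigma> - 1) * Pf s)) \<longlongrightarrow> 0) (at_right 0)"
      by (rule tendsto_powr_interval_integral_at_right_0[OF d12 assms(8,4)])
  qed
qed

end
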